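(* Let $M$ be a positive integer and let $K$ be an integer with $q_{KL}-1\le K\le M$. Then for every $q\in\mathcal U(M)\cap(1,K+1]$, the quasi-greedy expansion $\alpha(q)=(\alpha_i(q))$ satisfies \[M-K\le\alpha_i(q)\le K\quad\text{for all }i\ge1.\]
   Context: For a positive integer $J$, $\mathcal U(J)$ is the set of $q\in(1,J+1]$ such that $1$ has exactly one expansion $1=\sum_{i\ge1}d_iq^{-i}$ with $d_i\in\{0,1,\dots,J\}$. For $q\in(1,M+1]$, $\alpha(q)=\alpha_1(q)\alpha_2(q)\dots$ is the quasi-greedy $q$-expansion of $1$ over the alphabet $\{0,1,\dots,M\}$, i.e. the lexicographically largest sequence $(a_i)\in\{0,\dots,M\}^{\mathbb N}$ not ending in $0^\infty$ with $\sum a_iq^{-i}=1$. Let $(\tau_i)_{i\ge0}$ be the Thue–Morse sequence ($\tau_0=0$, $\tau_{2^n}\dots\tau_{2^{n+1}-1}=(1-\tau_0)\dots(1-\tau_{2^n-1})$); $q_{KL}=q_{KL}(M)$ is the base with $\alpha(q_{KL})=\lambda_1\lambda_2\dots$, $\lambda_i=k+\tau_i-\tau_{i-1}$ if $M=2k$, $\lambda_i=k+\tau_i$ if $M=2k+1$. *)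

theory Defs
  imports "HOL-Analysis.Analysis"
begin

text \<open>Sequences (d_1, d_2, ...) are encoded 0-based: d i stands for d_(i+1).\<close>

definition is_expansion :: "nat \<Rightarrow> real \<Rightarrow> (nat \<Rightarrow> nat) \<Rightarrow> bool" where
  "is_expansion J q d \<longleftrightarrow> (\<forall>i. d i \<le> J) \<and> (\<lambda>i. real (d i) / q ^ Suc i) sums 1"

definition univoque :: "nat \<Rightarrow> real set" where
  "univoque J = {q. 1 < q \<and> q \<le> real J + 1 \<and> (\<exists>!d. is_expansion J q d)}"

definition lex_less :: "(nat \<Rightarrow> nat) \<Rightarrow> (nat \<Rightarrow> nat) \<Rightarrow> bool" where
  "lex_less a b \<longleftrightarrow> (\<exists>n. (\<forall>i<n. a i = b i) \<and> a n < b n)"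

definition not_ending_zero :: "(nat \<Rightarrow> nat) \<Rightarrow> bool" where
  "not_ending_zero a \<longleftrightarrow> infinite {i. a i \<noteq> 0}"

definition quasi_greedy :: "nat \<Rightarrow> real \<Rightarrow> (nat \<Rightarrow> nat)" where
  "quasi_greedy M q = (THE a. is_expansion M q a \<and> not_ending_zero a \<and>
      (\<forall>b. is_expansion M q b \<and> not_ending_zero b \<longrightarrow> b = a \<or> lex_less b a))"

text \<open>Thue--Morse: block n = tau_0 ... tau_(2^n - 1), block (n+1) = block n followed by its complement.\<close>
fun tm_block :: "nat \<Rightarrow> nat list" where
  "tm_block 0 = [0]"
| "tm_block (Suc n) = tm_block n @ map (\<lambda>x. 1 - x) (tm_block n)"

definition thue_morse :: "nat \<Rightarrow> int" where
  "thue_morse i = int (tm_block (Suc i) ! i)"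

text \<open>lambda_i (i \<ge> 1), returned 0-based: kl_seq M i = lambda_(i+1).\<close>
definition kl_seq :: "nat \<Rightarrow> nat \<Rightarrow> nat" where
  "kl_seq M i = (if even M
      then nat (int (M div 2) + thue_morse (Suc i) - thue_morse i)
      else nat (int (M div 2) + thue_morse (Suc i)))"

definition q_KL :: "nat \<Rightarrow> real" where
  "q_KL M = (THE q. 1 < q \<and> q \<le> real M + 1 \<and> quasi_greedy M q = kl_seq M)"

end

theory Submission
  imports Defs
begin

text \<open>If 1 has a unique expansion \<open>d\<close> in base \<open>q\<close>, then so does every tail value
  \<open>T i = \<Sum>j. d (i + j) / q ^ (j + 1)\<close>. Hence no digit can be raised (\<open>d i < M\<close>
  forces \<open>T (i + 1) < 1\<close>) and none lowered (\<open>d i > 0\<close> forces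
  \<open>T (i + 1) > M / (q - 1) - 1\<close>), since otherwise the greedy algorithm would produce a
  second expansion; in particular \<open>d\<close> is the quasi-greedy expansion. When \<open>q < M + 1\<close>
  the first property gives \<open>T i \<le> 1\<close> for all \<open>i\<close>, hence \<open>d i < q\<close>; when \<open>q \<le> M\<close>
  the second propagates \<open>d i > M - q\<close> along the sequence.\<close>

definition is_expansion_of :: "nat \<Rightarrow> real \<Rightarrow> real \<Rightarrow> (nat \<Rightarrow> nat) \<Rightarrow> bool" where
  "is_expansion_of M q x d \<longleftrightarrow> (\<forall>i. d i \<le> M) \<and> (\<lambda>i. real (d i) / q ^ Suc i) sums x"

lemma is_expansion_iff_expansion_of_one: "is_expansion M q d \<longleftrightarrow> is_expansion_of M q 1 d"
  by (simp add: is_expansion_def is_expansion_of_def)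

lemma sums_const_over_powers:
  assumes "1 < (q::real)"
  shows "(\<lambda>j. c / q ^ Suc j) sums (c / (q - 1))"
proof -
  have "(\<lambda>j. (c/q) * (1/q)^j) sums ((c/q) * (1 / (1 - 1/q)))"
    using assms by (intro sums_mult geometric_sums) simp
  moreover have "(c/q) * (1 / (1 - 1/q)) = c / (q - 1)"
    using assms by (simp add: field_simps)
  moreover have "\<And>j. (c/q) * (1/q)^j = c / q ^ Suc j"
    by (simp add: power_one_over)
  ultimately show ?thesis by (simp only:)
qed

lemma is_expansion_of_bounds:
  assumes "1 < q" "is_expansion_of M q x d"
  shows "0 \<le> x" "x \<le> real M / (q - 1)"
proof -
  have d: "\<And>i. d i \<le> M" and x: "(\<lambda>i. real (d i) / q ^ Suc i) sums x"
    using assms(2) by (auto simp: is_expansion_of_def)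
  show "0 \<le> x"
    using sums_le[OF _ sums_zero x] assms(1) by simp
  show "x \<le> real M / (q - 1)"
    using sums_le[OF _ x sums_const_over_powers[OF assms(1)]] d assms(1)
    by (simp add: divide_right_mono)
qed

lemma is_expansion_of_case_nat:
  assumes "is_expansion_of M q y e" "a \<le> M" "q \<noteq> 0"
  shows "is_expansion_of M q ((real a + y) / q) (case_nat a e)"
proof -
  let ?f = "\<lambda>j. real (case_nat a e j) / q ^ Suc j"
  have "(\<lambda>j. real (e j) / q ^ Suc j / q) sums (y / q)"
    using assms(1) by (intro sums_divide) (simp add: is_expansion_of_def)
  then have "(\<lambda>j. ?f (Suc j)) sums (y / q)"
    by (simp add: field_simps)
  then have "?f sums (y / q + ?f 0)"
    by (rule sums_Suc_iff[THEN iffD1])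
  then have "?f sums ((real a + y) / q)"
    by (simp add: add_divide_distrib add.commute)
  then show ?thesis
    using assms by (auto simp: is_expansion_of_def split: nat.split)
qed

definition greedy_digit :: "nat \<Rightarrow> real \<Rightarrow> real \<Rightarrow> nat" where
  "greedy_digit M q r = min M (nat \<lfloor>q * r\<rfloor>)"

fun greedy_remainder :: "nat \<Rightarrow> real \<Rightarrow> real \<Rightarrow> nat \<Rightarrow> real" where
  "greedy_remainder M q x 0 = x"
| "greedy_remainder M q x (Suc n) =
     q * greedy_remainder M q x n - real (greedy_digit M q (greedy_remainder M q x n))"

lemma greedy_remainder_bounds:
  assumes q: "1 < q" "q \<le> real M + 1" and x: "0 \<le> x" "x \<le> real M / (q - 1)"
  shows "0 \<le> greedy_remainder M q x n \<and> greedy_remainder M q x n \<le> real M / (q - 1)"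
proof (induction n)
  case 0
  then show ?case using x by simp
next
  case (Suc n)
  define r where "r = greedy_remainder M q x n"
  have M_eq: "q * (real M / (q - 1)) - real M = real M / (q - 1)"
    using q by (simp add: field_simps)
  have one_le: "1 \<le> real M / (q - 1)"
    using q by (simp add: field_simps)
  have r: "0 \<le> r" "r \<le> real M / (q - 1)"
    using Suc by (auto simp: r_def)
  show ?case
  proof (cases "real M \<le> q * r")
    case True
    then have "greedy_digit M q r = M"
      by (simp add: greedy_digit_def le_nat_iff le_floor_iff)
    moreover have "q * r \<le> q * (real M / (q - 1))"
      using r q by (intro mult_left_mono) auto
    ultimately show ?thesis
      using True M_eq by (simp add: r_def[symmetric])
  next
    case False
    then have "\<lfloor>q * r\<rfloor> < int M"
      by (simp add: floor_less_iff)
    then have "greedy_digit M q r = nat \<lfloor>q * r\<rfloor>"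
      by (simp add: greedy_digit_def)
    moreover have "0 \<le> q * r" using r q by simp
    ultimately have "real (greedy_digit M q r) = of_int \<lfloor>q * r\<rfloor>"
      by simp
    then have "0 \<le> q * r - real (greedy_digit M q r)" "q * r - real (greedy_digit M q r) < 1"
      by linarith+
    then show ?thesis
      using one_le by (simp add: r_def[symmetric])
  qed
qed

lemma expansion_exists:
  assumes q: "1 < q" "q \<le> real M + 1" and x: "0 \<le> x" "x \<le> real M / (q - 1)"
  shows "\<exists>e. is_expansion_of M q x e"
proof -
  define r where "r = greedy_remainder M q x"
  define e where "e n = greedy_digit M q (r n)" for n
  have r_Suc: "r (Suc n) = q * r n - real (e n)" for n
    by (simp add: r_def e_def)
  have partial_sums: "(\<Sum>j<n. real (e j) / q ^ Suc j) = x - r n / q ^ n" for n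
  proof (induction n)
    case 0
    then show ?case by (simp add: r_def)
  next
    case (Suc n)
    have "(\<Sum>j<Suc n. real (e j) / q ^ Suc j) = x - r n / q ^ n + real (e n) / q ^ Suc n"
      using Suc by simp
    also have "\<dots> = x - (q * r n - real (e n)) / q ^ Suc n"
      using q by (simp add: field_simps)
    finally show ?case
      by (simp add: r_Suc)
  qed
  have "(\<lambda>n. r n / q ^ n) \<longlonglongrightarrow> 0"
  proof (rule Lim_null_comparison)
    show "\<forall>\<^sub>F n in sequentially. norm (r n / q ^ n) \<le> real M / (q - 1) * (1 / q) ^ n"
    proof (intro always_eventually allI)
      fix n
      have r: "0 \<le> r n" "r n \<le> real M / (q - 1)"
        using greedy_remainder_bounds[OF q x] by (auto simp: r_def)
      then have "norm (r n / q ^ n) = r n / q ^ n"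
        using q by simp
      also have "\<dots> \<le> real M / (q - 1) / q ^ n"
        using r q by (intro divide_right_mono) auto
      finally show "norm (r n / q ^ n) \<le> real M / (q - 1) * (1 / q) ^ n"
        by (simp add: power_one_over)
    qed
    show "(\<lambda>n. real M / (q - 1) * (1 / q) ^ n) \<longlonglongrightarrow> 0"
      using q by (auto intro!: tendsto_mult_right_zero LIMSEQ_power_zero)
  qed
  then have "(\<lambda>n. x - r n / q ^ n) \<longlonglongrightarrow> x"
    using tendsto_diff[OF tendsto_const] by fastforce
  then have "(\<lambda>j. real (e j) / q ^ Suc j) sums x"
    unfolding sums_def partial_sums .
  moreover have "e j \<le> M" for j
    by (simp add: e_def greedy_digit_def)
  ultimately have "is_expansion_of M q x e"
    by (simp add: is_expansion_of_def)
  then show ?thesis by blast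
qed

locale unique_expansion_of_one =
  fixes M :: nat and q :: real and d :: "nat \<Rightarrow> nat"
  assumes base_gt_one: "1 < q" and base_le: "q \<le> real M + 1"
    and expansion: "is_expansion M q d"
    and unique: "\<And>e. is_expansion M q e \<Longrightarrow> e = d"
begin

lemma digit_le: "d i \<le> M"
  using expansion by (simp add: is_expansion_def)

definition tail :: "nat \<Rightarrow> real" where
  "tail i = (\<Sum>j. real (d (i + j)) / q ^ Suc j)"

lemma tail_expansion: "is_expansion_of M q (tail i) (\<lambda>j. d (i + j))"
proof -
  have "summable (\<lambda>j. real (d (i + j)) / q ^ Suc j)"
  proof (rule summable_comparison_test)
    show "\<exists>N. \<forall>n\<ge>N. norm (real (d (i + n)) / q ^ Suc n) \<le> real M / q ^ Suc n"
      using digit_le base_gt_one by (auto intro!: divide_right_mono)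
    show "summable (\<lambda>j. real M / q ^ Suc j)"
      using sums_const_over_powers[OF base_gt_one] by (rule sums_summable)
  qed
  then show ?thesis
    by (simp add: is_expansion_of_def tail_def digit_le summable_sums)
qed

lemma tail_sums: "(\<lambda>j. real (d (i + j)) / q ^ Suc j) sums tail i"
  using tail_expansion by (simp add: is_expansion_of_def)

lemma tail_nonneg: "0 \<le> tail i"
  and tail_le_max: "tail i \<le> real M / (q - 1)"
  using is_expansion_of_bounds[OF base_gt_one tail_expansion] by auto

lemma tail_0: "tail 0 = 1"
proof -
  have "(\<lambda>i. real (d i) / q ^ Suc i) sums tail 0"
    using tail_sums[of 0] by simp
  moreover have "(\<lambda>i. real (d i) / q ^ Suc i) sums 1"
    using expansion by (simp add: is_expansion_def)
  ultimately show ?thesis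
    by (rule sums_unique2)
qed

lemma tail_Suc: "tail i = (real (d i) + tail (Suc i)) / q"
proof -
  have "is_expansion_of M q ((real (d i) + tail (Suc i)) / q) (case_nat (d i) (\<lambda>j. d (Suc i + j)))"
    using base_gt_one by (intro is_expansion_of_case_nat tail_expansion digit_le) auto
  moreover have "case_nat (d i) (\<lambda>j. d (Suc i + j)) = (\<lambda>j. d (i + j))"
    by (rule ext) (simp split: nat.split)
  ultimately show ?thesis
    using sums_unique2[OF tail_sums[of i]] by (simp add: is_expansion_of_def)
qed

lemma digit_eq: "real (d i) = q * tail i - tail (Suc i)"
  using tail_Suc[of i] base_gt_one by (simp add: field_simps)

lemma tail_expansion_unique:
  "is_expansion_of M q (tail i) e \<Longrightarrow> e = (\<lambda>j. d (i + j))"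
proof (induction i arbitrary: e)
  case 0
  then show ?case
    using unique by (simp add: tail_0 is_expansion_iff_expansion_of_one)
next
  case (Suc i)
  have "is_expansion_of M q (tail i) (case_nat (d i) e)"
    using is_expansion_of_case_nat[OF Suc.prems digit_le] base_gt_one by (simp add: tail_Suc[of i])
  then have "case_nat (d i) e = (\<lambda>j. d (i + j))"
    by (rule Suc.IH)
  then show ?case
    by (metis add_Suc_right nat.case(2) plus_1_eq_Suc add.assoc)
qed

text \<open>Both proofs replace the digit \<open>d i\<close> by \<open>d i \<plusminus> 1\<close> and re-expand the
  adjusted tail greedily, contradicting uniqueness.\<close>

lemma tail_Suc_less_one_if_digit_less:
  assumes "d i < M"
  shows "tail (Suc i) < 1"
proof (rule ccontr)
  assume "\<not> tail (Suc i) < 1"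
  moreover have "tail (Suc i) - 1 \<le> real M / (q - 1)"
    using tail_le_max[of "Suc i"] by simp
  ultimately obtain e where "is_expansion_of M q (tail (Suc i) - 1) e"
    using expansion_exists[OF base_gt_one base_le] by (meson not_less diff_ge_0_iff_ge)
  then have "is_expansion_of M q ((real (d i + 1) + (tail (Suc i) - 1)) / q) (case_nat (d i + 1) e)"
    using assms base_gt_one by (intro is_expansion_of_case_nat) auto
  then have "case_nat (d i + 1) e = (\<lambda>j. d (i + j))"
    by (intro tail_expansion_unique) (simp add: tail_Suc[of i])
  from fun_cong[OF this, of 0] show False
    by simp
qed

lemma tail_Suc_greater_if_digit_pos:
  assumes "0 < d i"
  shows "real M / (q - 1) - 1 < tail (Suc i)"
proof (rule ccontr)
  assume "\<not> real M / (q - 1) - 1 < tail (Suc i)"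
  moreover have "0 \<le> tail (Suc i) + 1"
    using tail_nonneg[of "Suc i"] by simp
  ultimately obtain e where "is_expansion_of M q (tail (Suc i) + 1) e"
    using expansion_exists[OF base_gt_one base_le] by (meson not_less le_diff_eq)
  then have "is_expansion_of M q ((real (d i - 1) + (tail (Suc i) + 1)) / q) (case_nat (d i - 1) e)"
    using digit_le[of i] base_gt_one by (intro is_expansion_of_case_nat) auto
  then have "case_nat (d i - 1) e = (\<lambda>j. d (i + j))"
    using assms by (intro tail_expansion_unique) (simp add: tail_Suc[of i] of_nat_diff)
  from fun_cong[OF this, of 0] show False
    using assms by simp
qed

lemma tail_pos: "0 < tail n"
proof (induction n)
  case 0
  then show ?case by (simp add: tail_0)
next
  case (Suc n)
  show ?case
  proof (cases "d n = 0")
    case True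
    have "0 < q * tail n"
      using Suc base_gt_one by simp
    then show ?thesis
      using digit_eq[of n] True by simp
  next
    case False
    have "1 \<le> real M / (q - 1)"
      using base_gt_one base_le by (simp add: field_simps)
    then show ?thesis
      using tail_Suc_greater_if_digit_pos[of n] False by simp
  qed
qed

lemma not_ending_zero: "not_ending_zero d"
  unfolding not_ending_zero_def infinite_nat_iff_unbounded
proof (rule allI, rule ccontr)
  fix m
  assume "\<not> (\<exists>n>m. n \<in> {i. d i \<noteq> 0})"
  then have "(\<lambda>j. real (d (Suc m + j)) / q ^ Suc j) = (\<lambda>_. 0)"
    by (intro ext) simp
  then have "tail (Suc m) = 0"
    using sums_unique2[OF tail_sums[of "Suc m"]] sums_zero by simp
  then show False
    using tail_pos[of "Suc m"] by simp
qed

lemma quasi_greedy_eq: "quasi_greedy M q = d"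
  unfolding quasi_greedy_def
proof (rule the_equality)
  show "is_expansion M q d \<and> not_ending_zero d \<and>
      (\<forall>b. is_expansion M q b \<and> not_ending_zero b \<longrightarrow> b = d \<or> lex_less b d)"
    using expansion not_ending_zero unique by blast
qed (use unique in blast)

lemma digit_Suc_greater_if_digit_pos:
  assumes "0 < d i"
  shows "real M - q < real (d (Suc i))"
proof -
  define G where "G = real M / (q - 1)"
  have "G - 1 < (real (d (Suc i)) + G) / q"
    using tail_Suc_greater_if_digit_pos[OF assms] tail_Suc[of "Suc i"] tail_le_max[of "Suc (Suc i)"] base_gt_one
    unfolding G_def by (smt (verit) divide_right_mono)
  then have "q * G - q < real (d (Suc i)) + G"
    using base_gt_one by (simp add: field_simps)
  moreover have "q * G - G = G * (q - 1)"
    by (simp add: algebra_simps)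
  moreover have "G * (q - 1) = real M"
    using base_gt_one by (simp add: G_def)
  ultimately show ?thesis
    by linarith
qed

context
  assumes base_less: "q < real M + 1"
begin

text \<open>A tail \<open>\<ge> 1\<close> forces the preceding digit to be \<open>M\<close>, and then, as
  \<open>M + 1 > q\<close>, the preceding tail exceeds 1; going back to \<open>tail 0 = 1\<close> is absurd.\<close>

lemma tail_greater_one_if_next_ge_one:
  assumes "1 \<le> tail (Suc n)"
  shows "1 < tail n"
proof -
  have "d n = M"
    using tail_Suc_less_one_if_digit_less[of n] digit_le[of n] assms by fastforce
  moreover have "1 < (real M + tail (Suc n)) / q"
    using assms base_less base_gt_one by (simp add: field_simps)
  ultimately show ?thesis
    using tail_Suc[of n] by simp
qed

lemma tail_Suc_less_one: "tail (Suc n) < 1"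
proof -
  have "1 \<le> tail (Suc n) \<Longrightarrow> 1 < tail 0" for n
    by (induction n) (auto intro: tail_greater_one_if_next_ge_one less_imp_le)
  then show ?thesis
    using tail_0 by (metis less_irrefl not_less)
qed

lemma tail_le_one: "tail n \<le> 1"
  using tail_0 tail_Suc_less_one by (cases n) (auto intro: less_imp_le)

lemma digit_less_base: "real (d i) < q"
  using digit_eq[of i] tail_pos[of "Suc i"] tail_le_one[of i] base_gt_one
  by (smt (verit) mult_left_le)

lemma first_digit_greater: "q - 1 < real (d 0)"
  using digit_eq[of 0] tail_0 tail_Suc_less_one[of 0] by simp

end

lemma digit_greater:
  assumes "q \<le> real M"
  shows "real M - q < real (d i)"
proof (induction i)
  case 0
  have less: "q < real M + 1" using assms by simp
  txt \<open>\<open>d 1 < q < d 0 + 1\<close>, so \<open>d 1 \<le> d 0\<close>.\<close>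
  have "d 1 \<le> d 0"
    using digit_less_base[OF less, of 1] first_digit_greater[OF less] by linarith
  moreover have "0 < d 0"
    using first_digit_greater[OF less] base_gt_one by simp
  ultimately show ?case
    using digit_Suc_greater_if_digit_pos[of 0] by simp
next
  case (Suc i)
  then show ?case
    using assms digit_Suc_greater_if_digit_pos by simp
qed

end

lemma univoque_unique_expansion_of_one:
  assumes "q \<in> univoque M"
  obtains d where "unique_expansion_of_one M q d"
  using assms unfolding univoque_def unique_expansion_of_one_def by blast

theorem lemma7p1:
  fixes M K :: nat and q :: real
  assumes "M \<ge> 1"
    and "q_KL M - 1 \<le> real K" and "K \<le> M"
    and "q \<in> univoque M" and "1 < q" and "q \<le> real K + 1"
  shows "\<forall>i. M - K \<le> quasi_greedy M q i \<and> quasi_greedy M q i \<le> K"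
proof -
  obtain d where d: "unique_expansion_of_one M q d"
    using assms(4) by (rule univoque_unique_expansion_of_one)
  interpret unique_expansion_of_one M q d by (rule d)
  show ?thesis
  proof (cases "K = M")
    case True
    then show ?thesis using quasi_greedy_eq digit_le by simp
  next
    case False
    then have "q \<le> real M" using assms(3,6) by linarith
    have "real (d i) < real (K + 1)" for i
      using digit_less_base[of i] \<open>q \<le> real M\<close> assms(6) by simp
    moreover have "real M < real (d i + K + 1)" for i
      using digit_greater[OF \<open>q \<le> real M\<close>, of i] assms(6) by simp
    ultimately show ?thesis
      unfolding quasi_greedy_eq of_nat_less_iff by (simp add: less_Suc_eq_le le_diff_conv)
  qed
qed

end
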